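(* Let triangle $ABC$ be inscribed in a circle $\Gamma$ with center $O$ and radius $R$, with $AB>BC$, and let $A,B,C$ also denote its angles at the respective vertices. Let $B'$ be the midpoint of the arc $CA$ of $\Gamma$ not containing $B$. Let the line through $B'$ perpendicular to $AB$ meet $\Gamma$ again at $E$, and let the line through $A$ perpendicular to $EA$ meet line $EB'$ at $F$. Then $FA=2R\sin\frac{C-A}{2}\tan\frac{B}{2}$. Moreover, for a point $D$ on the minor arc $CB'$, one has $AB+CD=BC+DA$ if and only if $DB'=2R\sin\frac{C-A}{2}\tan\frac{B}{2}$. Consequently the point $D$ on minor arc $CB'$ with $DB'=FA$ makes $ABCD$ a convex tangential (indeed bicentric) quadrilateral.
   Context: A convex quadrilateral $ABCD$ is tangential (has an incircle) iff $AB+CD=BC+DA$. *)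

theory Defs
  imports "HOL-Analysis.Analysis"
begin

definition cross2 :: "complex \<Rightarrow> complex \<Rightarrow> real" where
  "cross2 u v = Re u * Im v - Im u * Re v"

definition vangle :: "complex \<Rightarrow> complex \<Rightarrow> real" where
  "vangle u v = arccos ((u \<bullet> v) / (norm u * norm v))"

definition angle_at :: "complex \<Rightarrow> complex \<Rightarrow> complex \<Rightarrow> real" where
  "angle_at Q P S = vangle (Q - P) (S - P)"

definition opp_sides :: "complex \<Rightarrow> complex \<Rightarrow> complex \<Rightarrow> complex \<Rightarrow> bool" where
  "opp_sides P Q X Y \<longleftrightarrow> cross2 (Q - P) (X - P) * cross2 (Q - P) (Y - P) < 0"

definition convex_quad :: "complex \<Rightarrow> complex \<Rightarrow> complex \<Rightarrow> complex \<Rightarrow> bool" where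
  "convex_quad A B C D \<longleftrightarrow>
     (cross2 (B - A) (C - B) > 0 \<and> cross2 (C - B) (D - C) > 0 \<and>
      cross2 (D - C) (A - D) > 0 \<and> cross2 (A - D) (B - A) > 0) \<or>
     (cross2 (B - A) (C - B) < 0 \<and> cross2 (C - B) (D - C) < 0 \<and>
      cross2 (D - C) (A - D) < 0 \<and> cross2 (A - D) (B - A) < 0)"

definition tangential_quad :: "complex \<Rightarrow> complex \<Rightarrow> complex \<Rightarrow> complex \<Rightarrow> bool" where
  "tangential_quad A B C D \<longleftrightarrow>
     (\<exists>I r. r > 0 \<and> I \<in> interior (convex hull {A, B, C, D}) \<and>
        infdist I (closed_segment A B) = r \<and> infdist I (closed_segment B C) = r \<and>
        infdist I (closed_segment C D) = r \<and> infdist I (closed_segment D A) = r)"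

end

theory Submission
  imports Defs
begin

text \<open>Scaling, rotating and possibly reflecting the figure, we may take \<open>\<Gamma>\<close> to be the unit
  circle parametrised by \<open>circ_pt t = (sin 2t, -cos 2t)\<close>, with \<open>B' = circ_pt 0\<close>,
  \<open>A = circ_pt (-u)\<close>, \<open>C = circ_pt u\<close>, \<open>B = circ_pt v\<close> and \<open>0 < u < v < \<pi>/2\<close>. In this
  parametrisation every chord has length \<open>2 \<bar>sin (t\<^sub>2 - t\<^sub>1)\<bar>\<close>, the angles of the triangle are
  \<open>v - u\<close>, \<open>2u\<close>, \<open>\<pi> - u - v\<close>, so the claimed length is \<open>2 cos v tan u\<close>, and \<open>E = circ_pt (v - u - \<pi>/2)\<close>.
  For \<open>D = circ_pt d\<close> with \<open>0 < d < u\<close> the Pitot relation \<open>AB + CD = BC + DA\<close> becomes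
  \<open>sin d cos u = cos v sin u\<close>, i.e. \<open>DB' = 2 sin d = 2 cos v tan u\<close>. When it holds, an explicit
  point is at equal distance from the four side lines with all feet of perpendiculars on the
  sides, so it is the centre of an incircle.\<close>

section \<open>Distances to segments and incircles of quadrilaterals\<close>

lemma cross2_sq_add_inner_sq: "(cross2 u v)\<^sup>2 + (u \<bullet> v)\<^sup>2 = (norm u)\<^sup>2 * (norm v)\<^sup>2"
  unfolding cross2_def inner_complex_def
  by (simp only: cmod_power2) (simp add: power2_eq_square algebra_simps)

lemma abs_cross2_le: "\<bar>cross2 u v\<bar> \<le> norm u * norm v"
proof -
  have "\<bar>cross2 u v\<bar>\<^sup>2 \<le> (norm u * norm v)\<^sup>2"
    using cross2_sq_add_inner_sq[of u v] zero_le_power2[of "u \<bullet> v"]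
    unfolding power_mult_distrib power2_abs by linarith
  then show ?thesis by (rule power2_le_imp_le) simp
qed

lemma cross2_segment_point:
  "cross2 (Q - P) (I - ((1 - m) *\<^sub>R P + m *\<^sub>R Q)) = cross2 (Q - P) (I - P)"
  unfolding cross2_def by (simp add: algebra_simps)

lemma infdist_closed_segment:
  assumes PQ: "P \<noteq> Q" and r: "r \<ge> 0" and cross: "\<bar>cross2 (Q - P) (I - P)\<bar> = r * norm (Q - P)"
    and foot: "0 \<le> (I - P) \<bullet> (Q - P)" "(I - P) \<bullet> (Q - P) \<le> (norm (Q - P))\<^sup>2"
  shows "infdist I (closed_segment P Q) = r"
proof -
  define n where "n = norm (Q - P)"
  have n: "n > 0" using PQ by (simp add: n_def)
  define l where "l = ((I - P) \<bullet> (Q - P)) / n\<^sup>2"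
  have l01: "0 \<le> l" "l \<le> 1" using foot n by (simp_all add: l_def n_def field_simps)
  define T where "T = (1 - l) *\<^sub>R P + l *\<^sub>R Q"
  have T_in: "T \<in> closed_segment P Q" unfolding T_def closed_segment_def using l01 by blast
  have "(norm (I - T))\<^sup>2 = (norm (I - P))\<^sup>2 - 2 * l * ((I - P) \<bullet> (Q - P)) + l\<^sup>2 * n\<^sup>2"
    unfolding T_def n_def by (simp only: cmod_power2) (simp add: inner_complex_def power2_eq_square algebra_simps)
  also have "\<dots> = (norm (I - P))\<^sup>2 - ((I - P) \<bullet> (Q - P))\<^sup>2 / n\<^sup>2"
    using n by (simp add: l_def field_simps power2_eq_square)
  also have "\<dots> = (cross2 (Q - P) (I - P))\<^sup>2 / n\<^sup>2"
    using cross2_sq_add_inner_sq[of "Q - P" "I - P"] n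
    by (simp add: n_def field_simps inner_commute[of "Q - P" "I - P"])
  also have "\<dots> = r\<^sup>2"
    using n cross unfolding n_def by (metis power2_abs power_mult_distrib nonzero_mult_div_cancel_right
        power_not_zero order_less_irrefl)
  finally have "dist I T = r"
    using power2_eq_iff_nonneg[OF norm_ge_zero[of "I - T"] r] by (simp add: dist_norm)
  then have le: "infdist I (closed_segment P Q) \<le> r" using T_in infdist_le by metis
  have ge: "r \<le> dist I X" if X_in: "X \<in> closed_segment P Q" for X
  proof -
    obtain m where X: "X = (1 - m) *\<^sub>R P + m *\<^sub>R Q" using X_in unfolding closed_segment_def by blast
    have "r * n = \<bar>cross2 (Q - P) (I - X)\<bar>" using cross X cross2_segment_point by (simp add: n_def)
    also have "\<dots> \<le> n * norm (I - X)" using abs_cross2_le n_def by simp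
    finally show ?thesis using n by (simp add: dist_norm mult.commute)
  qed
  have "r \<le> infdist I (closed_segment P Q)"
    unfolding infdist_notempty[OF ends_in_segment(1)[THEN ex_in_conv[THEN iffD1, OF exI]]] by (rule cINF_greatest) (auto intro: ge)
  with le show ?thesis by (rule antisym)
qed

text \<open>The signed areas of the three triangles \<open>zBC\<close>, \<open>zCA\<close>, \<open>zAB\<close> are barycentric
  coordinates of \<open>z\<close>.\<close>
lemma in_convex_hull_3_cross2:
  assumes "s * cross2 (C - B) (z - B) \<ge> 0" "s * cross2 (A - C) (z - C) \<ge> 0"
    "s * cross2 (B - A) (z - A) \<ge> 0" "s * cross2 (B - A) (C - A) > 0"
  shows "z \<in> convex hull {A, B, C}"
proof -
  define a where "a = cross2 (C - B) (z - B)"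
  define b where "b = cross2 (A - C) (z - C)"
  define c where "c = cross2 (B - A) (z - A)"
  define S where "S = cross2 (B - A) (C - A)"
  have sum: "a + b + c = S" unfolding a_def b_def c_def S_def cross2_def by (simp add: algebra_simps)
  have Sz: "of_real S * z = of_real a * A + of_real b * B + of_real c * C"
    unfolding a_def b_def c_def S_def cross2_def by (simp add: complex_eq_iff algebra_simps)
  have sS: "s * S > 0" using assms(4) by (simp add: S_def)
  then have S: "S \<noteq> 0" by auto
  have nonneg: "0 \<le> x / S" if "s * x \<ge> 0" for x
  proof -
    have "0 \<le> (s * x) / (s * S)" using that sS by (intro divide_nonneg_pos) auto
    moreover have "s \<noteq> 0" using sS by auto
    ultimately show ?thesis by simp
  qed
  have "z = (a / S) *\<^sub>R A + (b / S) *\<^sub>R B + (c / S) *\<^sub>R C"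
  proof -
    have "z = (of_real S * z) / of_real S" using S by simp
    then show ?thesis unfolding Sz using S by (simp add: scaleR_conv_of_real field_simps)
  qed
  moreover have "a / S + b / S + c / S = 1" using sum S by (simp add: field_simps)
  moreover have "0 \<le> a / S" "0 \<le> b / S" "0 \<le> c / S"
    using nonneg assms(1-3) a_def b_def c_def by auto
  ultimately show ?thesis unfolding convex_hull_3 by blast
qed

lemma open_halfplane_cross2: "open {z. 0 < s * cross2 (Q - P) (z - P)}"
proof -
  have "continuous_on UNIV (\<lambda>z. s * cross2 (Q - P) (z - P))"
    unfolding cross2_def by (intro continuous_intros)
  then show ?thesis using open_Collect_less[of "\<lambda>_. 0" "\<lambda>z. s * cross2 (Q - P) (z - P)"]
    by (simp add: continuous_on_const)
qed

lemma interior_convex_hull_quad: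
  assumes convex: "s * cross2 (B - A) (C - B) > 0" "s * cross2 (D - C) (A - D) > 0"
    and inside: "0 < s * cross2 (B - A) (I - A)" "0 < s * cross2 (C - B) (I - B)"
      "0 < s * cross2 (D - C) (I - C)" "0 < s * cross2 (A - D) (I - D)"
  shows "I \<in> interior (convex hull {A, B, C, D})"
proof -
  define U where "U = {z. 0 < s * cross2 (B - A) (z - A)} \<inter> {z. 0 < s * cross2 (C - B) (z - B)}
     \<inter> {z. 0 < s * cross2 (D - C) (z - C)} \<inter> {z. 0 < s * cross2 (A - D) (z - D)}"
  have "open U" unfolding U_def by (intro open_Int open_halfplane_cross2)
  moreover have "I \<in> U" unfolding U_def using inside by auto
  moreover have "U \<subseteq> convex hull {A, B, C, D}"
  proof
    fix z assume "z \<in> U"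
    then have z: "0 < s * cross2 (B - A) (z - A)" "0 < s * cross2 (C - B) (z - B)"
      "0 < s * cross2 (D - C) (z - C)" "0 < s * cross2 (A - D) (z - D)" unfolding U_def by auto
    have flip: "cross2 (A - C) (z - C) = - cross2 (C - A) (z - A)"
      "cross2 (B - A) (C - A) = cross2 (B - A) (C - B)" "cross2 (C - A) (D - A) = cross2 (D - C) (A - D)"
      unfolding cross2_def by (simp_all add: algebra_simps)
    \<comment> \<open>the diagonal \<open>AC\<close> splits the quadrilateral into the triangles \<open>ABC\<close> and \<open>ACD\<close>\<close>
    have "z \<in> convex hull {A, B, C} \<union> convex hull {A, C, D}"
    proof (cases "s * cross2 (C - A) (z - A) \<le> 0")
      case True
      then show ?thesis using z convex flip by (auto intro!: in_convex_hull_3_cross2[of s])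
    next
      case False
      then show ?thesis using z convex flip by (auto intro!: in_convex_hull_3_cross2[of s])
    qed
    moreover have "convex hull {A, B, C} \<union> convex hull {A, C, D} \<subseteq> convex hull {A, B, C, D}"
      by (intro Un_least hull_mono) auto
    ultimately show "z \<in> convex hull {A, B, C, D}" by blast
  qed
  ultimately show ?thesis using interior_maximal by blast
qed

text \<open>\<open>i\<close> lies at distance \<open>r\<close> from the line \<open>pq\<close>, on the side selected by the sign \<open>s\<close>, and its
  foot of perpendicular lies on the segment \<open>pq\<close>.\<close>
definition touches_side :: "real \<Rightarrow> complex \<Rightarrow> complex \<Rightarrow> complex \<Rightarrow> real \<Rightarrow> bool" where
  "touches_side s p q i r \<longleftrightarrow> s * cross2 (q - p) (i - p) = r * norm (q - p)
     \<and> 0 \<le> (i - p) \<bullet> (q - p) \<and> (i - p) \<bullet> (q - p) \<le> (norm (q - p))\<^sup>2"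

definition incircle_data ::
    "real \<Rightarrow> complex \<Rightarrow> complex \<Rightarrow> complex \<Rightarrow> complex \<Rightarrow> complex \<Rightarrow> real \<Rightarrow> bool" where
  "incircle_data s a b c d i r \<longleftrightarrow>
     s * cross2 (b - a) (c - b) > 0 \<and> s * cross2 (c - b) (d - c) > 0 \<and>
     s * cross2 (d - c) (a - d) > 0 \<and> s * cross2 (a - d) (b - a) > 0 \<and> r > 0 \<and>
     touches_side s a b i r \<and> touches_side s b c i r \<and> touches_side s c d i r \<and> touches_side s d a i r"

lemma infdist_closed_segment_if_touches_side:
  assumes "s = 1 \<or> s = -1" "touches_side s p q i r" "p \<noteq> q" "r \<ge> 0"
  shows "infdist i (closed_segment p q) = r"
proof (rule infdist_closed_segment)
  have "\<bar>cross2 (q - p) (i - p)\<bar> = \<bar>s * cross2 (q - p) (i - p)\<bar>" using assms(1) by auto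
  then show "\<bar>cross2 (q - p) (i - p)\<bar> = r * norm (q - p)"
    using assms(2,4) unfolding touches_side_def by simp
qed (use assms in \<open>auto simp: touches_side_def\<close>)

lemma convex_tangential_quad_if_incircle_data:
  assumes s: "s = 1 \<or> s = -1" and data: "incircle_data s a b c d i r"
  shows "convex_quad a b c d \<and> tangential_quad a b c d"
proof
  show "convex_quad a b c d" using assms unfolding incircle_data_def convex_quad_def by auto
  have ne: "a \<noteq> b" "b \<noteq> c" "c \<noteq> d" "d \<noteq> a" using data by (auto simp: incircle_data_def cross2_def)
  have r: "r > 0" using data by (simp add: incircle_data_def)
  have "i \<in> interior (convex hull {a, b, c, d})"
    using data ne by (intro interior_convex_hull_quad[of s]) (auto simp: incircle_data_def touches_side_def)
  moreover have "infdist i (closed_segment a b) = r" "infdist i (closed_segment b c) = r"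
    "infdist i (closed_segment c d) = r" "infdist i (closed_segment d a) = r"
    using data ne r by (auto intro!: infdist_closed_segment_if_touches_side[OF s] simp: incircle_data_def)
  ultimately show "tangential_quad a b c d" unfolding tangential_quad_def using r by blast
qed

section \<open>Points of the unit circle\<close>

text \<open>The parameter \<open>t\<close> is half the central angle measured from the lowest point \<open>-\<i>\<close>.\<close>
definition circ_pt :: "real \<Rightarrow> complex" where
  "circ_pt t = Complex (sin (2 * t)) (- cos (2 * t))"

lemma circ_pt_0: "circ_pt 0 = - \<i>"
  unfolding circ_pt_def by (simp add: complex_eq_iff)

lemma circ_pt_add_pi: "circ_pt (t + pi) = circ_pt t"
  unfolding circ_pt_def by (simp add: distrib_left)

lemma norm_circ_pt: "norm (circ_pt t) = 1"
  unfolding circ_pt_def by (simp add: cmod_def)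

lemma circ_pt_diff:
  "circ_pt t2 - circ_pt t1 = Complex (2 * sin (t2 - t1) * cos (t1 + t2)) (2 * sin (t2 - t1) * sin (t1 + t2))"
proof -
  have pyth: "sin t1 ^ 2 + cos t1 ^ 2 = 1" "sin t2 ^ 2 + cos t2 ^ 2 = 1" by simp_all
  show ?thesis unfolding circ_pt_def
    by (simp add: complex_eq_iff sin_diff cos_diff sin_add cos_add sin_double cos_double) (use pyth in algebra)
qed

lemma cross2_circ_pt:
  "cross2 (circ_pt t1 - circ_pt t0) (circ_pt t2 - circ_pt t0) = 4 * sin (t1 - t0) * sin (t2 - t0) * sin (t2 - t1)"
proof -
  have pyth: "sin t0 ^ 2 + cos t0 ^ 2 = 1" "sin t1 ^ 2 + cos t1 ^ 2 = 1" "sin t2 ^ 2 + cos t2 ^ 2 = 1"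
    by simp_all
  show ?thesis unfolding cross2_def circ_pt_def
    by (simp add: sin_diff cos_diff sin_double cos_double) (use pyth in algebra)
qed

lemma cross2_circ_pt_turn:
  "cross2 (circ_pt t1 - circ_pt t0) (circ_pt t2 - circ_pt t1) = 4 * sin (t1 - t0) * sin (t2 - t0) * sin (t2 - t1)"
  using cross2_circ_pt[of t1 t0 t2] unfolding cross2_def by (simp add: algebra_simps)

lemma inner_circ_pt:
  "(circ_pt t1 - circ_pt t0) \<bullet> (circ_pt t2 - circ_pt t0) = 4 * sin (t1 - t0) * sin (t2 - t0) * cos (t2 - t1)"
proof -
  have pyth: "sin t0 ^ 2 + cos t0 ^ 2 = 1" "sin t1 ^ 2 + cos t1 ^ 2 = 1" "sin t2 ^ 2 + cos t2 ^ 2 = 1"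
    by simp_all
  show ?thesis unfolding inner_complex_def circ_pt_def
    by (simp add: sin_diff cos_diff sin_double cos_double) (use pyth in algebra)
qed

lemma norm_circ_pt_diff: "norm (circ_pt t1 - circ_pt t0) = 2 * \<bar>sin (t1 - t0)\<bar>"
proof -
  have "norm (circ_pt t1 - circ_pt t0) = sqrt ((circ_pt t1 - circ_pt t0) \<bullet> (circ_pt t1 - circ_pt t0))"
    by (simp add: norm_eq_sqrt_inner)
  also have "\<dots> = sqrt ((2 * sin (t1 - t0))\<^sup>2)" by (simp add: inner_circ_pt power2_eq_square)
  finally show ?thesis by (simp only: real_sqrt_abs abs_mult abs_numeral)
qed

lemma dist_circ_pt: "dist (circ_pt t1) (circ_pt t0) = 2 * \<bar>sin (t1 - t0)\<bar>"
  by (simp add: dist_norm norm_circ_pt_diff)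

lemma angle_at_circ_pt: "angle_at (circ_pt t1) (circ_pt t0) (circ_pt t2) =
   arccos (4 * sin (t1 - t0) * sin (t2 - t0) * cos (t2 - t1) / (2 * \<bar>sin (t1 - t0)\<bar> * (2 * \<bar>sin (t2 - t0)\<bar>)))"
  unfolding angle_at_def vangle_def inner_circ_pt norm_circ_pt_diff ..

lemma unit_circle_eq_circ_pt:
  assumes "norm z = 1"
  obtains t where "- (pi / 2) < t" "t \<le> pi / 2" "z = circ_pt t"
proof -
  define th where "th = Arg z"
  have th: "- pi < th" "th \<le> pi" using Arg_bounded th_def by auto
  have z: "z = Complex (cos th) (sin th)"
    using rcis_cmod_Arg[of z] assms unfolding th_def by (simp add: rcis_def cis.code)
  define t where "t = th / 2 + pi / 4"
  have "2 * t = th + pi / 2" unfolding t_def by simp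
  then have z_eq: "circ_pt t = z" unfolding circ_pt_def z by (simp add: sin_add cos_add)
  show ?thesis
  proof (cases "t \<le> pi / 2")
    case True
    then show ?thesis using th z_eq by (intro that[of t]) (auto simp: t_def)
  next
    case False
    have "circ_pt (t - pi) = z" using z_eq circ_pt_add_pi[of "t - pi"] by simp
    then show ?thesis using th False by (intro that[of "t - pi"]) (auto simp: t_def)
  qed
qed

section \<open>Similarities\<close>

definition simil :: "bool \<Rightarrow> complex \<Rightarrow> real \<Rightarrow> complex \<Rightarrow> complex \<Rightarrow> complex" where
  "simil s w R Oc z = Oc + of_real R * w * (if s then z else cnj z)"

definition orient :: "bool \<Rightarrow> real" where
  "orient s = (if s then 1 else -1)"

lemma inner_mult_left_same: "(a * z) \<bullet> (a * v) = (cmod a)\<^sup>2 * (z \<bullet> v)"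
  unfolding inner_complex_def cmod_power2 by (simp add: algebra_simps power2_eq_square)

lemma cross2_mult_left_same: "cross2 (a * z) (a * v) = (cmod a)\<^sup>2 * cross2 z v"
  unfolding cross2_def cmod_power2 by (simp add: algebra_simps power2_eq_square)

lemma inner_cnj_cnj: "cnj z \<bullet> cnj v = z \<bullet> v"
  unfolding inner_complex_def by simp

lemma cross2_cnj_cnj: "cross2 (cnj z) (cnj v) = - cross2 z v"
  unfolding cross2_def by simp

lemma simil_True_eq_simil_False: "simil True w R Oc z = simil False (- w) R Oc (- cnj z)"
  unfolding simil_def by simp

locale similarity =
  fixes s :: bool and w :: complex and R :: real and Oc :: complex
  assumes unit_rotation: "cmod w = 1" and ratio_pos: "R > 0"
begin

abbreviation T :: "complex \<Rightarrow> complex" where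
  "T \<equiv> simil s w R Oc"

lemma norm_ratio_rotation: "cmod (of_real R * w) = R"
  using unit_rotation ratio_pos by (simp add: norm_mult)

lemma simil_diff: "T x - T y = of_real R * w * (if s then x - y else cnj (x - y))"
  unfolding simil_def by (simp add: algebra_simps)

lemma dist_simil: "dist (T x) (T y) = R * dist x y"
  unfolding dist_norm simil_diff using ratio_pos unit_rotation
  by (simp add: norm_mult del: complex_cnj_diff)

lemma simil_0: "T 0 = Oc"
  unfolding simil_def by simp

lemma dist_centre_simil_iff: "dist Oc (T z) = R \<longleftrightarrow> norm z = 1"
  using dist_simil[of 0 z] ratio_pos by (simp add: simil_0 dist_norm)

lemma inner_simil: "(T x - T y) \<bullet> (T z - T v) = R\<^sup>2 * ((x - y) \<bullet> (z - v))"
  unfolding simil_diff mult.assoc[symmetric, of _ _ "if s then _ else _"]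
  by (simp only: inner_mult_left_same norm_ratio_rotation) (simp add: inner_cnj_cnj del: complex_cnj_diff)

lemma cross2_simil:
  "cross2 (T x - T y) (T z - T v) = orient s * R\<^sup>2 * cross2 (x - y) (z - v)"
  unfolding simil_diff mult.assoc[symmetric, of _ _ "if s then _ else _"]
  by (simp only: cross2_mult_left_same norm_ratio_rotation) (simp add: cross2_cnj_cnj orient_def del: complex_cnj_diff)

lemma angle_at_simil: "angle_at (T x) (T y) (T z) = angle_at x y z"
proof -
  have "norm (T x - T y) = R * norm (x - y)" for x y using dist_simil[of x y] by (simp add: dist_norm)
  then show ?thesis
    unfolding angle_at_def vangle_def inner_simil using ratio_pos by (simp add: power2_eq_square)
qed

lemma opp_sides_simil: "opp_sides (T p) (T q) (T x) (T y) \<longleftrightarrow> opp_sides p q x y"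
proof -
  have "orient s * orient s = 1" by (simp add: orient_def)
  then have "cross2 (T q - T p) (T x - T p) * cross2 (T q - T p) (T y - T p)
     = R ^ 4 * (cross2 (q - p) (x - p) * cross2 (q - p) (y - p))"
    unfolding cross2_simil by (simp add: algebra_simps power4_eq_xxxx power2_eq_square)
  then show ?thesis unfolding opp_sides_def using ratio_pos by (simp add: mult_less_0_iff)
qed

lemma simil_surj: "\<exists>z. Z = T z"
proof (cases s)
  case True
  then show ?thesis using ratio_pos unit_rotation
    by (intro exI[of _ "(Z - Oc) / (of_real R * w)"]) (auto simp: simil_def)
next
  case False
  then show ?thesis using ratio_pos unit_rotation
    by (intro exI[of _ "cnj ((Z - Oc) / (of_real R * w))"]) (auto simp: simil_def)
qed

lemma simil_inj: "T x = T y \<Longrightarrow> x = y"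
  using dist_simil[of x y] ratio_pos by simp

lemma simil_affine: "T (a + t *\<^sub>R (b - a)) = T a + t *\<^sub>R (T b - T a)"
  unfolding simil_def by (simp add: scaleR_conv_of_real algebra_simps)

lemma touches_side_simil:
  assumes "touches_side s0 p q i r"
  shows "touches_side (orient s * s0) (T p) (T q) (T i) (R * r)"
proof -
  have norm: "norm (T q - T p) = R * norm (q - p)" using dist_simil[of q p] by (simp add: dist_norm)
  have "orient s * orient s = 1" by (simp add: orient_def)
  then have cross: "orient s * s0 * cross2 (T q - T p) (T i - T p) = R\<^sup>2 * (s0 * cross2 (q - p) (i - p))"
    unfolding cross2_simil by (simp add: algebra_simps)
  let ?X = "(i - p) \<bullet> (q - p)" and ?N = "(norm (q - p))\<^sup>2"
  have h: "s0 * cross2 (q - p) (i - p) = r * norm (q - p)" "0 \<le> ?X" "?X \<le> ?N"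
    using assms unfolding touches_side_def by auto
  have "R\<^sup>2 * ?X \<le> R\<^sup>2 * ?N" using h by (intro mult_left_mono) auto
  moreover have "0 \<le> R\<^sup>2 * ?X" using h by simp
  ultimately show ?thesis unfolding touches_side_def cross inner_simil norm using h
    by (simp add: power_mult_distrib algebra_simps power2_eq_square)
qed

lemma incircle_data_simil:
  assumes "incircle_data s0 a b c d i r"
  shows "incircle_data (orient s * s0) (T a) (T b) (T c) (T d) (T i) (R * r)"
proof -
  have turn: "orient s * s0 * cross2 (T y - T x) (T z - T y) = R\<^sup>2 * (s0 * cross2 (y - x) (z - y))"
    for x y z unfolding cross2_simil by (simp add: orient_def algebra_simps)
  show ?thesis
    using assms ratio_pos touches_side_simil unfolding incircle_data_def turn by auto
qed

end

section \<open>The configuration on the unit circle\<close>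

lemma sin_diff_swap: "sin (a - b) = - sin (b - a)" for a b :: real
  using sin_minus[of "b - a"] by simp

lemma sin_minus_diff_neg: "sin (- a - b) = - sin (a + b)" for a b :: real
  using sin_minus[of "a + b"] by simp

lemma sin_diff_mult_sin_add: "sin (t - u) * sin (t + u) = sin t ^ 2 - sin u ^ 2" for t u :: real
proof -
  have pyth: "sin t ^ 2 + cos t ^ 2 = 1" "sin u ^ 2 + cos u ^ 2 = 1" by simp_all
  show ?thesis by (simp add: sin_diff sin_add) (use pyth in algebra)
qed

lemma angles_circ_pt_triangle:
  fixes u v :: real
  assumes u: "0 < u" "u < v" "v < pi / 2"
  shows "angle_at (circ_pt v) (circ_pt u) (circ_pt (-u)) = pi - u - v"
    "angle_at (circ_pt v) (circ_pt (-u)) (circ_pt u) = v - u"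
    "angle_at (circ_pt (-u)) (circ_pt v) (circ_pt u) = 2 * u"
proof -
  have s1: "sin (v + u) > 0" and s2: "sin (v - u) > 0" and s2u: "sin (2 * u) > 0"
    using u by (auto intro!: sin_gt_zero)
  have uu: "u + u = 2 * u" by simp
  have "angle_at (circ_pt v) (circ_pt u) (circ_pt (-u)) = arccos (cos (pi - u - v))"
  proof -
    have "cos (pi - u - v) = - cos (u + v)" using cos_diff[of pi "u+v"] by (simp add: diff_diff_eq)
    then show ?thesis unfolding angle_at_circ_pt sin_minus_diff_neg[of u u] uu using s2 s2u
      by (simp add: add.commute cos_minus[of "u + v", simplified])
  qed
  also have "\<dots> = pi - u - v" using u by (intro arccos_cos) auto
  finally show "angle_at (circ_pt v) (circ_pt u) (circ_pt (-u)) = pi - u - v" .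
  have "angle_at (circ_pt v) (circ_pt (-u)) (circ_pt u) = arccos (cos (v - u))"
    unfolding angle_at_circ_pt using s1 s2u sin_diff_swap[of u v] cos_minus[of "v - u"]
    by (simp add: uu)
  also have "\<dots> = v - u" using u by (intro arccos_cos) auto
  finally show "angle_at (circ_pt v) (circ_pt (-u)) (circ_pt u) = v - u" .
  have "angle_at (circ_pt (-u)) (circ_pt v) (circ_pt u) = arccos (cos (2 * u))"
    unfolding angle_at_circ_pt sin_minus_diff_neg[of u v] sin_diff_swap[of u v] add.commute[of u v]
    using s1 s2 by (simp add: uu)
  also have "\<dots> = 2 * u" using u by (intro arccos_cos) auto
  finally show "angle_at (circ_pt (-u)) (circ_pt v) (circ_pt u) = 2 * u" .
qed

lemma perpendicular_chord_circ_pt: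
  fixes u v :: real and e :: complex
  assumes u: "0 < u" "u < v" "v < pi / 2"
    and e: "norm e = 1" "e \<noteq> circ_pt 0" "(e - circ_pt 0) \<bullet> (circ_pt v - circ_pt (-u)) = 0"
  shows "e = circ_pt (v - u - pi / 2)"
proof -
  obtain x y where exy: "e = Complex x y" by (cases e)
  define m where "m = v - u"
  have s1: "sin (v + u) > 0" using u by (intro sin_gt_zero) auto
  have circ: "x^2 + y^2 = 1" using e(1) exy by (simp add: cmod_def)
  have "(e - circ_pt 0) \<bullet> (circ_pt v - circ_pt (-u)) = 2 * sin (v + u) * (x * cos m + (y + 1) * sin m)"
    unfolding circ_pt_diff exy circ_pt_0 inner_complex_def m_def by (simp add: algebra_simps)
  then have lin: "x * cos m + (y + 1) * sin m = 0" using e(3) s1 by simp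
  define k where "k = - x * sin m + (y + 1) * cos m"
  have sc: "sin m ^2 + cos m ^2 = 1" by simp
  have xk: "x = - k * sin m" unfolding k_def using lin sc by algebra
  have yk: "y + 1 = k * cos m" unfolding k_def using lin sc by algebra
  have "k * (k - 2 * cos m) = 0"
  proof -
    have "k * (k - 2 * cos m) = x^2 + (y+1)^2 - 2 * (y + 1)" using xk yk sc by algebra
    moreover have "x^2 + (y+1)^2 - 2 * (y + 1) = 0" using circ by (simp add: power2_eq_square algebra_simps)
    ultimately show ?thesis by simp
  qed
  moreover have "k \<noteq> 0"
  proof
    assume "k = 0"
    then have "e = circ_pt 0" using xk yk exy circ_pt_0 by (simp add: complex_eq_iff)
    then show False using e(2) by simp
  qed
  ultimately have k: "k = 2 * cos m" by simp
  have "circ_pt (v - u - pi / 2) = Complex (- sin (2 * m)) (cos (2 * m))"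
  proof -
    have "2 * (v - u - pi / 2) = 2 * m - pi" unfolding m_def by (simp add: algebra_simps)
    then show ?thesis unfolding circ_pt_def by (simp add: sin_diff cos_diff)
  qed
  also have "\<dots> = e" unfolding exy sin_double cos_double_cos using xk yk k
    by (simp add: algebra_simps power2_eq_square)
  finally show ?thesis ..
qed

lemma inner_chords_through_E:
  fixes u v :: real
  defines "e \<equiv> circ_pt (v - u - pi / 2)"
  shows "(e - circ_pt (-u)) \<bullet> (e - circ_pt (-u)) = 4 * cos v ^ 2"
    and "(circ_pt 0 - e) \<bullet> (circ_pt 0 - e) = 4 * cos (v - u) ^ 2"
    and "(e - circ_pt (-u)) \<bullet> (circ_pt 0 - e) = - 4 * cos (v - u) * cos v * cos u"
proof -
  have sin_eq: "sin (v - u - pi / 2 - - u) = - cos v" "sin (0 - (v - u - pi / 2)) = cos (v - u)"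
    "sin (- u - (v - u - pi / 2)) = cos v"
    using sin_diff[of v "pi / 2"] sin_diff[of "pi / 2" "v - u"] sin_diff[of "pi / 2" v]
    by (simp_all add: algebra_simps)
  show "(e - circ_pt (-u)) \<bullet> (e - circ_pt (-u)) = 4 * cos v ^ 2"
    unfolding e_def inner_circ_pt sin_eq by (simp add: power2_eq_square)
  show "(circ_pt 0 - e) \<bullet> (circ_pt 0 - e) = 4 * cos (v - u) ^ 2"
    unfolding e_def inner_circ_pt sin_eq by (simp add: power2_eq_square)
  have "(e - circ_pt (-u)) \<bullet> (circ_pt 0 - e) = - ((circ_pt 0 - e) \<bullet> (circ_pt (-u) - e))"
    by (simp add: inner_diff_left inner_diff_right inner_commute algebra_simps)
  then show "(e - circ_pt (-u)) \<bullet> (circ_pt 0 - e) = - 4 * cos (v - u) * cos v * cos u"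
    unfolding e_def inner_circ_pt sin_eq by simp
qed

lemma norm_FA_circ_pt:
  fixes u v t :: real and f :: complex
  assumes u: "0 < u" "u < v" "v < pi / 2"
    and f: "f = circ_pt (v - u - pi / 2) + t *\<^sub>R (circ_pt 0 - circ_pt (v - u - pi / 2))"
      "(f - circ_pt (-u)) \<bullet> (circ_pt (v - u - pi / 2) - circ_pt (-u)) = 0"
  shows "norm (f - circ_pt (-u)) = 2 * cos v * tan u"
proof -
  define D1 where "D1 = circ_pt (v - u - pi / 2) - circ_pt (-u)"
  define D2 where "D2 = circ_pt 0 - circ_pt (v - u - pi / 2)"
  note gram = inner_chords_through_E[of v u, folded D1_def D2_def]
  have cu: "cos u > 0" and cv: "cos v > 0" using u by (auto intro!: cos_gt_zero_pi)
  have su: "sin u > 0" using u by (intro sin_gt_zero) auto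
  have fa: "f - circ_pt (-u) = D1 + t *\<^sub>R D2" unfolding f(1) D1_def D2_def by simp
  have "D1 \<bullet> D1 + t * (D1 \<bullet> D2) = 0"
    using f(2) unfolding fa D1_def[symmetric] by (simp add: inner_add_left inner_commute[of D2 D1])
  then have t: "t * (cos (v - u) * cos u) = cos v"
    unfolding gram using cv by (simp add: power2_eq_square algebra_simps)
  have "(norm (f - circ_pt (-u)))\<^sup>2 = D1 \<bullet> D1 + 2 * t * (D1 \<bullet> D2) + t\<^sup>2 * (D2 \<bullet> D2)"
    unfolding fa power2_norm_eq_inner
    by (simp add: inner_add_left inner_add_right inner_commute power2_eq_square algebra_simps)
  also have "\<dots> = 4 * cos v ^ 2 - 8 * cos v * (t * (cos (v - u) * cos u))
      + 4 * (t * (cos (v - u) * cos u))\<^sup>2 / cos u ^ 2"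
    unfolding gram using cu by (simp add: power2_eq_square field_simps)
  also have "\<dots> = 4 * cos v ^ 2 * (1 - cos u ^ 2) / cos u ^ 2"
    unfolding t using cu by (simp add: field_simps power2_eq_square)
  also have "\<dots> = (2 * cos v * tan u)\<^sup>2"
    unfolding tan_def by (simp add: power_divide power_mult_distrib sin_squared_eq)
  finally have "(norm (f - circ_pt (-u)))\<^sup>2 = (2 * cos v * tan u)\<^sup>2" .
  moreover have "2 * cos v * tan u \<ge> 0" using cv cu su by (simp add: tan_def)
  ultimately show ?thesis using power2_eq_iff_nonneg[OF norm_ge_zero] by blast
qed

lemma opp_sides_minor_arc_iff:
  assumes "0 < u" "u < pi / 2"
  shows "opp_sides (circ_pt u) (circ_pt 0) (circ_pt t) (circ_pt (-u)) \<longleftrightarrow> sin (t - u) * sin t < 0"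
proof -
  have su: "sin u > 0" and s2u: "sin (2 * u) > 0" using assms by (auto intro!: sin_gt_zero)
  have "cross2 (circ_pt 0 - circ_pt u) (circ_pt (-u) - circ_pt u) < 0"
    unfolding cross2_circ_pt using su s2u by (simp add: sin_minus_diff_neg[of u u] mult_pos_pos)
  then have "opp_sides (circ_pt u) (circ_pt 0) (circ_pt t) (circ_pt (-u))
      \<longleftrightarrow> 0 < cross2 (circ_pt 0 - circ_pt u) (circ_pt t - circ_pt u)"
    unfolding opp_sides_def by (simp add: mult_less_0_iff)
  also have "\<dots> \<longleftrightarrow> 0 < - (4 * sin u) * (sin (t - u) * sin t)"
    unfolding cross2_circ_pt by (simp add: algebra_simps)
  also have "\<dots> \<longleftrightarrow> sin (t - u) * sin t < 0"
    using su by (simp add: zero_less_mult_iff mult_less_0_iff)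
  finally show ?thesis .
qed

lemma opp_sides_minor_arc:
  assumes u: "0 < u" "u < pi / 2" and z: "norm z = 1" "opp_sides (circ_pt u) (circ_pt 0) z (circ_pt (-u))"
  shows "\<exists>d. 0 < d \<and> d < u \<and> z = circ_pt d"
proof -
  obtain t where t: "- (pi / 2) < t" "t \<le> pi / 2" "z = circ_pt t" using unit_circle_eq_circ_pt[OF z(1)] .
  have pr: "sin (t - u) * sin t < 0" using z(2) unfolding t(3) opp_sides_minor_arc_iff[OF u] .
  have "0 < t"
  proof (rule ccontr)
    assume "\<not> 0 < t"
    then have "sin t \<le> 0" "0 < sin (u - t)"
      using t u sin_ge_zero[of "-t"] by (auto intro!: sin_gt_zero)
    then show False using pr sin_diff_swap[of t u] mult_nonneg_nonpos[of "sin (u - t)" "sin t"] by simp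
  qed
  moreover have "t < u"
  proof (rule ccontr)
    assume "\<not> t < u"
    then have "sin t > 0" "sin (t - u) \<ge> 0" using t u by (auto intro!: sin_gt_zero sin_ge_zero)
    then show False using pr by (simp add: mult_less_0_iff)
  qed
  ultimately show ?thesis using t by blast
qed

lemma opp_sides_minor_arcI:
  assumes "0 < d" "d < u" "u < pi / 2"
  shows "opp_sides (circ_pt u) (circ_pt 0) (circ_pt d) (circ_pt (-u))"
proof -
  have "sin d > 0" "sin (u - d) > 0" using assms by (auto intro!: sin_gt_zero)
  then show ?thesis using assms sin_diff_swap[of d u] by (simp add: opp_sides_minor_arc_iff mult_pos_neg)
qed

lemma pitot_circ_pt_iff:
  fixes u v d :: real
  assumes u: "0 < u" "u < v" "v < pi / 2" and d: "0 < d" "d < u"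
  shows "dist (circ_pt (-u)) (circ_pt v) + dist (circ_pt u) (circ_pt d)
      = dist (circ_pt v) (circ_pt u) + dist (circ_pt d) (circ_pt (-u))
    \<longleftrightarrow> dist (circ_pt d) (circ_pt 0) = 2 * cos v * tan u"
proof -
  have cu: "cos u > 0" using u by (intro cos_gt_zero_pi) auto
  have sin_pos: "sin (v + u) > 0" "sin (v - u) > 0" "sin (u - d) > 0" "sin (u + d) > 0" "sin d > 0"
    using u d by (auto intro!: sin_gt_zero)
  have "dist (circ_pt (-u)) (circ_pt v) + dist (circ_pt u) (circ_pt d)
      = dist (circ_pt v) (circ_pt u) + dist (circ_pt d) (circ_pt (-u))
    \<longleftrightarrow> 2 * sin (v + u) + 2 * sin (u - d) = 2 * sin (v - u) + 2 * sin (u + d)"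
    unfolding dist_circ_pt sin_minus_diff_neg[of u v] add.commute[of u v] sin_minus_diff_neg[of u d]
      add.commute[of u d]
    using sin_pos by (simp add: add.commute[of d u])
  also have "\<dots> \<longleftrightarrow> cos v * sin u = sin d * cos u"
    by (simp add: sin_add sin_diff algebra_simps)
  also have "\<dots> \<longleftrightarrow> 2 * sin d = 2 * cos v * tan u"
    unfolding tan_def using cu by (auto simp: field_simps)
  also have "\<dots> \<longleftrightarrow> dist (circ_pt d) (circ_pt 0) = 2 * cos v * tan u"
    unfolding dist_circ_pt using sin_pos by simp
  finally show ?thesis .
qed

lemma exists_pitot_angle:
  fixes u v :: real
  assumes u: "0 < u" "u < v" "v < pi / 2"
  shows "\<exists>d. 0 < d \<and> d < u \<and> sin d = cos v * tan u"
proof -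
  have cu: "cos u > 0" and cv: "cos v > 0" using u by (auto intro!: cos_gt_zero_pi)
  have su: "sin u > 0" using u by (intro sin_gt_zero) auto
  have cvu: "cos v < cos u" using u by (intro cos_monotone_0_pi) auto
  define x where "x = cos v * tan u"
  have x0: "0 < x" unfolding x_def tan_def using cu cv su by simp
  have xs: "x < sin u" unfolding x_def tan_def using cu cv su cvu by (simp add: field_simps)
  have s1: "sin u \<le> 1" by simp
  have x1: "x \<le> 1" using xs s1 by linarith
  define d where "d = arcsin x"
  have "sin d = x" unfolding d_def using x0 x1 by (intro sin_arcsin) auto
  moreover have "0 < d" unfolding d_def using arcsin_less_arcsin[of 0 x] x0 x1 by simp
  moreover have "d < u"
    unfolding d_def using arcsin_less_arcsin[of x "sin u"] x0 xs s1 arcsin_sin[of u] u by simp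
  ultimately show ?thesis unfolding x_def by blast
qed

lemma right_half_circle_eq_circ_pt:
  assumes g: "norm g = 1" "Re g > 0"
  shows "\<exists>u. 0 < u \<and> u < pi / 2 \<and> g = circ_pt u \<and> - cnj g = circ_pt (-u)"
proof -
  define x where "x = Re g"
  define y where "y = Im g"
  have xy: "x^2 + y^2 = 1" using g(1) unfolding x_def y_def cmod_def by simp
  have x0: "x > 0" using g(2) x_def by simp
  have y1: "-1 < y" "y < 1"
  proof -
    have "y^2 < 1" using xy x0 by (smt (verit) zero_less_power2)
    then have "\<bar>y\<bar> < 1" by (simp add: abs_square_less_1)
    then show "-1 < y" "y < 1" by auto
  qed
  define u where "u = arccos (- y) / 2"
  have b: "0 < arccos (- y) \<and> arccos (- y) < pi" using y1 by (intro arccos_lt_bounded) auto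
  have u2: "2 * u = arccos (- y)" unfolding u_def by simp
  have s: "sin (2 * u) = x"
  proof -
    have "sin (2 * u) = sqrt (1 - y^2)" unfolding u2 using y1 sin_arccos[of "-y"] by simp
    also have "1 - y^2 = x^2" using xy by simp
    finally show ?thesis using x0 by simp
  qed
  have c: "cos (2 * u) = - y" unfolding u2 using y1 by simp
  have "g = circ_pt u" unfolding circ_pt_def s c using x_def y_def by (simp add: complex_eq_iff)
  moreover have "- cnj g = circ_pt (-u)" unfolding circ_pt_def using s c x_def y_def by (simp add: complex_eq_iff)
  moreover have "0 < u" "u < pi / 2" using b u2 by auto
  ultimately show ?thesis by blast
qed

lemma opp_sides_major_arc_iff:
  assumes "0 < u" "u < pi / 2"
  shows "opp_sides (circ_pt u) (circ_pt (-u)) (circ_pt 0) (circ_pt t) \<longleftrightarrow> sin u ^ 2 < sin t ^ 2"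
proof -
  have su: "sin u > 0" and s2u: "sin (2 * u) > 0" using assms by (auto intro!: sin_gt_zero)
  define X where "X = sin (t - u) * sin (t + u)"
  have "cross2 (circ_pt (-u) - circ_pt u) (circ_pt 0 - circ_pt u)
      * cross2 (circ_pt (-u) - circ_pt u) (circ_pt t - circ_pt u)
      = - (16 * sin (2 * u) ^ 2 * (sin u * sin u)) * X"
    unfolding cross2_circ_pt sin_minus_diff_neg[of u u] X_def by (simp add: algebra_simps power2_eq_square)
  moreover have "16 * sin (2 * u) ^ 2 * (sin u * sin u) > 0" using su s2u by simp
  moreover have "X = sin t ^ 2 - sin u ^ 2" unfolding X_def by (rule sin_diff_mult_sin_add)
  ultimately show ?thesis unfolding opp_sides_def by (simp add: mult_less_0_iff zero_less_mult_iff)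
qed

lemma circ_pt_eq_beyond:
  assumes u: "0 < u" "u < pi / 2" and t: "- (pi / 2) < t" "t \<le> pi / 2" and sq: "sin u ^ 2 < sin t ^ 2"
  obtains v where "u < v" "v < pi - u" "circ_pt t = circ_pt v"
proof (cases "0 \<le> t")
  case True
  have "sin u > 0" "sin t \<ge> 0" using u t True by (auto intro!: sin_gt_zero sin_ge_zero)
  then have "sin u < sin t" using sq by (smt (verit) power_mono)
  then have "u < t" using sin_mono_less_eq[of u t] u t by auto
  then show ?thesis using t u by (intro that[of t]) auto
next
  case False
  have "sin u > 0" using u by (intro sin_gt_zero) auto
  moreover have "sin (-t) \<ge> 0" using t False by (intro sin_ge_zero) auto
  moreover have "sin t ^ 2 = sin (-t) ^ 2" by simp
  ultimately have "sin u < sin (-t)" using sq by (smt (verit) power_mono)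
  then have "u < -t" using sin_mono_less_eq[of u "-t"] u t False by auto
  then show ?thesis using t u False circ_pt_add_pi[of t] by (intro that[of "t + pi"]) auto
qed

text \<open>\<open>B\<close> lies on the arc \<open>AC\<close> not containing \<open>B'\<close>, and \<open>AB > BC\<close> puts it nearer to \<open>C\<close>.\<close>
lemma circ_pt_major_arc:
  assumes u: "0 < u" "u < pi / 2" and b: "norm b = 1" "opp_sides (circ_pt u) (circ_pt (-u)) (circ_pt 0) b"
    and longer: "dist (circ_pt (-u)) b > dist b (circ_pt u)"
  shows "\<exists>v. u < v \<and> v < pi / 2 \<and> b = circ_pt v"
proof -
  obtain t where t: "- (pi / 2) < t" "t \<le> pi / 2" "b = circ_pt t" using unit_circle_eq_circ_pt[OF b(1)] .
  have "sin u ^ 2 < sin t ^ 2" using b(2) unfolding t(3) opp_sides_major_arc_iff[OF u] .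
  then obtain v where v: "u < v" "v < pi - u" "b = circ_pt v"
    using circ_pt_eq_beyond[OF u t(1,2)] t(3) by metis
  have su: "sin u > 0" "sin (u + v) > 0" "sin (v - u) > 0" using u v by (auto intro!: sin_gt_zero)
  then have "sin (u + v) > sin (v - u)"
    using longer unfolding v(3) dist_circ_pt sin_minus_diff_neg[of u v] by simp
  then have "cos v * sin u > 0" by (simp add: sin_add sin_diff algebra_simps)
  then have "cos v > 0" using su by (simp add: zero_less_mult_iff)
  moreover have "cos v \<le> 0" if "pi / 2 \<le> v"
    using that v u cos_mono_le_eq[of v "pi / 2"] by auto
  ultimately show ?thesis using v by force
qed

section \<open>The incircle when the Pitot relation holds\<close>

text \<open>Up to the sign of \<open>sin (t2 - t1)\<close>: the signed distance of \<open>(x, y)\<close> from the line through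
  \<open>circ_pt t1\<close> and \<open>circ_pt t2\<close>, and the position along that line of its foot of perpendicular,
  measured from \<open>circ_pt t1\<close>.\<close>
definition chord_offset :: "real \<Rightarrow> real \<Rightarrow> real \<Rightarrow> real \<Rightarrow> real" where
  "chord_offset x y t1 t2 = - x * sin (t1 + t2) + y * cos (t1 + t2) + cos (t1 - t2)"

definition chord_proj :: "real \<Rightarrow> real \<Rightarrow> real \<Rightarrow> real \<Rightarrow> real" where
  "chord_proj x y t1 t2 = x * cos (t1 + t2) + y * sin (t1 + t2) - sin (t1 - t2)"

lemma cross2_circ_pt_chord:
  "cross2 (circ_pt t2 - circ_pt t1) (Complex x y - circ_pt t1) = 2 * sin (t2 - t1) * chord_offset x y t1 t2"
proof -
  have pyth: "sin t1 ^ 2 + cos t1 ^ 2 = 1" "sin t2 ^ 2 + cos t2 ^ 2 = 1" by simp_all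
  show ?thesis unfolding cross2_def circ_pt_def chord_offset_def
    by (simp add: sin_diff cos_diff sin_add cos_add sin_double cos_double) (use pyth in algebra)
qed

lemma inner_circ_pt_chord:
  "(Complex x y - circ_pt t1) \<bullet> (circ_pt t2 - circ_pt t1) = 2 * sin (t2 - t1) * chord_proj x y t1 t2"
proof -
  have pyth: "sin t1 ^ 2 + cos t1 ^ 2 = 1" "sin t2 ^ 2 + cos t2 ^ 2 = 1" by simp_all
  show ?thesis unfolding inner_complex_def circ_pt_def chord_proj_def
    by (simp add: sin_diff cos_diff sin_add cos_add sin_double cos_double) (use pyth in algebra)
qed

lemma touches_side_negI:
  assumes "cross2 (q - p) (i - p) = - (2 * S) * r" "norm (q - p) = 2 * S"
    "(i - p) \<bullet> (q - p) = 2 * S * t" "S > 0" "0 \<le> t" "t \<le> 2 * S"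
  shows "touches_side (-1) p q i r"
proof -
  have "2 * S * t \<le> 2 * S * (2 * S)" by (rule mult_left_mono) (use assms in auto)
  then show ?thesis unfolding touches_side_def using assms by (simp add: power2_eq_square)
qed

locale pitot_config =
  fixes u v d :: real
  assumes bounds: "0 < u" "u < v" "v < pi / 2" "0 < d" "d < u"
    and pitot: "sin d * cos u = cos v * sin u"
begin

lemma cos_pos: "cos u > 0" "cos v > 0" "cos (v - d) > 0"
  using bounds by (auto intro!: cos_gt_zero_pi)

lemma cos_nonzero: "cos u \<noteq> 0" "cos (v - d) \<noteq> 0"
  using cos_pos by auto

lemma sin_pos: "sin u > 0" "sin d > 0" "sin (v + u) > 0" "sin (v - u) > 0" "sin (u - d) > 0"
  "sin (u + d) > 0" "sin (v - d) > 0" "sin (2 * u) > 0"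
  using bounds by (auto intro!: sin_gt_zero)

lemmas pyth = sin_cos_squared_add[of u] sin_cos_squared_add[of v] sin_cos_squared_add[of d]

definition "incentre_x = 2 * cos v * sin d / cos (v - d)"
definition "incentre_y = (2 * sin v * sin d - cos (v - d)) / cos (v - d)"
definition "incentre = Complex incentre_x incentre_y"
definition "inradius = 2 * sin u * cos v * sin (v - d) / cos (v - d)"

text \<open>Distances from the vertices \<open>A = circ_pt (-u)\<close>, \<open>B = circ_pt v\<close>, \<open>C = circ_pt u\<close>,
  \<open>D = circ_pt d\<close> to the points where the incircle touches the sides.\<close>
definition "tangent_B = 2 * cos u * cos v * sin (v - d) / cos (v - d)"
definition "tangent_D = 2 * sin u ^ 2 * cos v * sin (v - d) / (cos u * cos (v - d))"
definition "tangent_A = 2 * sin (v + u) - tangent_B"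
definition "tangent_C = 2 * sin (v - u) - tangent_B"

lemma incentre_x_eq: "incentre_x * cos (v - d) = 2 * cos v * sin d"
  unfolding incentre_x_def using cos_nonzero by simp

lemma incentre_y_eq: "incentre_y * cos (v - d) = 2 * sin v * sin d - cos (v - d)"
  unfolding incentre_y_def using cos_nonzero by simp

lemma chord_offset_incentre:
  assumes "- (2 * cos v * sin d) * sin (t1 + t2) + (2 * sin v * sin d - cos (v - d)) * cos (t1 + t2)
     + cos (v - d) * cos (t1 - t2) = cos (v - d) * V"
  shows "chord_offset incentre_x incentre_y t1 t2 = V"
proof -
  have "cos (v - d) * chord_offset incentre_x incentre_y t1 t2
      = - (incentre_x * cos (v - d)) * sin (t1 + t2) + (incentre_y * cos (v - d)) * cos (t1 + t2)
        + cos (v - d) * cos (t1 - t2)"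
    unfolding chord_offset_def by (simp add: algebra_simps)
  also have "\<dots> = cos (v - d) * V" unfolding incentre_x_eq incentre_y_eq by (rule assms)
  finally show ?thesis using cos_nonzero by simp
qed

lemma chord_proj_incentre:
  assumes "(2 * cos v * sin d) * cos (t1 + t2) + (2 * sin v * sin d - cos (v - d)) * sin (t1 + t2)
     - cos (v - d) * sin (t1 - t2) = cos (v - d) * V"
  shows "chord_proj incentre_x incentre_y t1 t2 = V"
proof -
  have "cos (v - d) * chord_proj incentre_x incentre_y t1 t2
      = (incentre_x * cos (v - d)) * cos (t1 + t2) + (incentre_y * cos (v - d)) * sin (t1 + t2)
        - cos (v - d) * sin (t1 - t2)"
    unfolding chord_proj_def by (simp add: algebra_simps)
  also have "\<dots> = cos (v - d) * V" unfolding incentre_x_eq incentre_y_eq by (rule assms)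
  finally show ?thesis using cos_nonzero by simp
qed

lemma inradius_eq: "cos (v - d) * inradius = 2 * sin u * cos v * sin (v - d)"
  unfolding inradius_def using cos_nonzero by simp

lemma tangent_B_eq: "cos (v - d) * tangent_B = 2 * cos u * cos v * sin (v - d)"
  unfolding tangent_B_def using cos_nonzero by simp

lemma chord_offset_AB: "chord_offset incentre_x incentre_y (-u) v = - inradius"
  by (rule chord_offset_incentre, unfold mult_minus_right inradius_eq)
    (simp add: sin_diff cos_diff sin_add cos_add algebra_simps)

lemma chord_offset_BC: "chord_offset incentre_x incentre_y v u = inradius"
  by (rule chord_offset_incentre, unfold inradius_eq)
    (simp add: sin_diff cos_diff sin_add cos_add algebra_simps)

lemma chord_offset_CD: "chord_offset incentre_x incentre_y u d = inradius"
  by (rule chord_offset_incentre, unfold inradius_eq,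
      simp add: sin_diff cos_diff sin_add cos_add) (use pyth pitot in algebra)

lemma chord_offset_DA: "chord_offset incentre_x incentre_y d (-u) = inradius"
  by (rule chord_offset_incentre, unfold inradius_eq,
      simp add: sin_diff cos_diff sin_add cos_add) (use pyth pitot in algebra)

lemma tangent_A_eq:
  "cos (v - d) * tangent_A = 2 * sin (v + u) * cos (v - d) - 2 * cos u * cos v * sin (v - d)"
  unfolding tangent_A_def using tangent_B_eq by (simp add: algebra_simps)

lemma tangent_C_eq:
  "cos (v - d) * tangent_C = 2 * sin (v - u) * cos (v - d) - 2 * cos u * cos v * sin (v - d)"
  unfolding tangent_C_def using tangent_B_eq by (simp add: algebra_simps)

lemma tangent_D_eq: "cos (v - d) * cos u * tangent_D = 2 * sin u ^ 2 * cos v * sin (v - d)"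
  unfolding tangent_D_def using cos_nonzero by simp

lemma chord_proj_AB: "chord_proj incentre_x incentre_y (-u) v = tangent_A"
  by (rule chord_proj_incentre, unfold tangent_A_eq)
    (simp add: sin_diff cos_diff sin_add cos_add algebra_simps)

lemma chord_proj_BC: "chord_proj incentre_x incentre_y v u = - tangent_B"
  by (rule chord_proj_incentre, unfold mult_minus_right tangent_B_eq)
    (simp add: sin_diff cos_diff sin_add cos_add algebra_simps)

lemma chord_proj_CD: "chord_proj incentre_x incentre_y u d = - tangent_C"
  by (rule chord_proj_incentre, unfold mult_minus_right tangent_C_eq,
      simp add: sin_diff cos_diff sin_add cos_add) (use pyth pitot in algebra)

lemma chord_proj_DA: "chord_proj incentre_x incentre_y d (-u) = - tangent_D"
proof (rule chord_proj_incentre)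
  let ?L = "(2 * cos v * sin d) * cos (d + - u) + (2 * sin v * sin d - cos (v - d)) * sin (d + - u)
     - cos (v - d) * sin (d - - u)"
  have "cos u * ?L = cos u * (cos (v - d) * - tangent_D)"
  proof -
    have "cos u * (cos (v - d) * - tangent_D) = - (cos (v - d) * cos u * tangent_D)"
      by (simp add: algebra_simps)
    also have "\<dots> = - (2 * sin u ^ 2 * cos v * sin (v - d))" unfolding tangent_D_eq ..
    finally show ?thesis
      by (simp add: sin_diff cos_diff sin_add cos_add) (use pyth pitot in algebra)
  qed
  then show "?L = cos (v - d) * - tangent_D" using mult_left_cancel[OF cos_nonzero(1)] by blast
qed

lemma tangent_C_add_D: "tangent_C + tangent_D = 2 * sin (u - d)"
proof -
  have "cos (v - d) * cos u * (tangent_C + tangent_D)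
      = cos u * (cos (v - d) * tangent_C) + cos (v - d) * cos u * tangent_D"
    by (simp add: algebra_simps)
  also have "\<dots> = cos u * (2 * sin (v - u) * cos (v - d) - 2 * cos u * cos v * sin (v - d))
      + 2 * sin u ^ 2 * cos v * sin (v - d)"
    unfolding tangent_C_eq tangent_D_eq ..
  also have "\<dots> = cos (v - d) * cos u * (2 * sin (u - d))"
    by (simp add: sin_diff cos_diff sin_add cos_add) (use pyth pitot in algebra)
  finally show ?thesis using cos_nonzero by simp
qed

lemma tangent_D_add_A: "tangent_D + tangent_A = 2 * sin (u + d)"
proof -
  have "cos (v - d) * cos u * (tangent_D + tangent_A)
      = cos u * (cos (v - d) * tangent_A) + cos (v - d) * cos u * tangent_D"
    by (simp add: algebra_simps)
  also have "\<dots> = cos u * (2 * sin (v + u) * cos (v - d) - 2 * cos u * cos v * sin (v - d))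
      + 2 * sin u ^ 2 * cos v * sin (v - d)"
    unfolding tangent_A_eq tangent_D_eq ..
  also have "\<dots> = cos (v - d) * cos u * (2 * sin (u + d))"
    by (simp add: sin_diff cos_diff sin_add cos_add) (use pyth pitot in algebra)
  finally show ?thesis using cos_nonzero by simp
qed

lemma tangent_A_mult_C: "tangent_A * tangent_C = inradius ^ 2"
proof -
  have "(cos (v - d) * tangent_A) * (cos (v - d) * tangent_C) = (cos (v - d) * inradius) ^ 2"
    unfolding tangent_A_eq tangent_C_eq inradius_eq
    by (simp add: sin_diff cos_diff sin_add cos_add power2_eq_square) (use pyth pitot in algebra)
  then have "cos (v - d) ^ 2 * (tangent_A * tangent_C) = cos (v - d) ^ 2 * inradius ^ 2"
    by (simp add: algebra_simps power2_eq_square)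
  then show ?thesis using cos_nonzero by simp
qed

lemma tangent_A_add_C: "tangent_A + tangent_C = 4 * cos u * sin d / cos (v - d)"
proof -
  have "cos (v - d) * (tangent_A + tangent_C) = cos (v - d) * tangent_A + cos (v - d) * tangent_C"
    by (simp add: algebra_simps)
  also have "\<dots> = 4 * cos u * sin d"
    unfolding tangent_A_eq tangent_C_eq
    by (simp add: sin_diff cos_diff sin_add cos_add) (use pyth in algebra)
  finally show ?thesis using cos_nonzero by (simp add: field_simps)
qed

lemma inradius_pos: "inradius > 0"
  unfolding inradius_def using sin_pos cos_pos by simp

lemma tangent_pos: "tangent_A > 0" "tangent_B > 0" "tangent_C > 0" "tangent_D > 0"
proof -
  show "tangent_B > 0" unfolding tangent_B_def using sin_pos cos_pos by simp
  show "tangent_D > 0" unfolding tangent_D_def using sin_pos cos_pos by simp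
  have "tangent_A * tangent_C > 0" using tangent_A_mult_C inradius_pos by simp
  moreover have "tangent_A + tangent_C > 0" using tangent_A_add_C sin_pos cos_pos by simp
  ultimately show "tangent_A > 0" "tangent_C > 0"
    by (smt (verit) mult_nonneg_nonpos mult_nonpos_nonneg)+
qed

lemma touches_sides:
  "touches_side (-1) (circ_pt (-u)) (circ_pt v) incentre inradius"
  "touches_side (-1) (circ_pt v) (circ_pt u) incentre inradius"
  "touches_side (-1) (circ_pt u) (circ_pt d) incentre inradius"
  "touches_side (-1) (circ_pt d) (circ_pt (-u)) incentre inradius"
proof -
  note offset = chord_offset_AB chord_offset_BC chord_offset_CD chord_offset_DA
  note proj = chord_proj_AB chord_proj_BC chord_proj_CD chord_proj_DA
  note chord = cross2_circ_pt_chord inner_circ_pt_chord norm_circ_pt_diff incentre_def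
  show "touches_side (-1) (circ_pt (-u)) (circ_pt v) incentre inradius"
    by (rule touches_side_negI[where S = "sin (v + u)" and t = tangent_A])
      (use sin_pos tangent_pos tangent_A_def in \<open>simp_all add: chord offset proj\<close>)
  show "touches_side (-1) (circ_pt v) (circ_pt u) incentre inradius"
    by (rule touches_side_negI[where S = "sin (v - u)" and t = tangent_B])
      (use sin_pos tangent_pos tangent_C_def in \<open>simp_all add: chord offset proj sin_diff_swap[of u v]\<close>)
  show "touches_side (-1) (circ_pt u) (circ_pt d) incentre inradius"
    by (rule touches_side_negI[where S = "sin (u - d)" and t = tangent_C])
      (use sin_pos tangent_pos tangent_C_add_D in \<open>simp_all add: chord offset proj sin_diff_swap[of d u]\<close>)
  show "touches_side (-1) (circ_pt d) (circ_pt (-u)) incentre inradius"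
    by (rule touches_side_negI[where S = "sin (u + d)" and t = tangent_D])
      (use sin_pos tangent_pos tangent_D_add_A in \<open>simp_all add: chord offset proj sin_minus_diff_neg[of u d]\<close>)
qed

lemma incircle_data_circ_pt:
  "incircle_data (-1) (circ_pt (-u)) (circ_pt v) (circ_pt u) (circ_pt d) incentre inradius"
proof -
  have "0 < - cross2 (circ_pt v - circ_pt (-u)) (circ_pt u - circ_pt v)"
    unfolding cross2_circ_pt_turn sin_diff_swap[of u v] using sin_pos by (simp add: mult_pos_pos)
  moreover have "0 < - cross2 (circ_pt u - circ_pt v) (circ_pt d - circ_pt u)"
    unfolding cross2_circ_pt_turn sin_diff_swap[of u v] sin_diff_swap[of d v] sin_diff_swap[of d u]
    using sin_pos by (simp add: mult_pos_pos)
  moreover have "0 < - cross2 (circ_pt d - circ_pt u) (circ_pt (-u) - circ_pt d)"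
    unfolding cross2_circ_pt_turn sin_diff_swap[of d u] sin_minus_diff_neg[of u d] using sin_pos by simp
  moreover have "0 < - cross2 (circ_pt (-u) - circ_pt d) (circ_pt v - circ_pt (-u))"
    unfolding cross2_circ_pt_turn sin_minus_diff_neg[of u d] using sin_pos by simp
  ultimately show ?thesis unfolding incircle_data_def using inradius_pos touches_sides by simp
qed

end

section \<open>Normal form of the configuration\<close>

lemma unit_equidistant_from_bottom:
  assumes "norm a = 1" "norm g = 1" "a \<noteq> g" "dist (circ_pt 0) a = dist (circ_pt 0) g"
  shows "a = - cnj g"
proof -
  have "(Re a)\<^sup>2 + (Im a + 1)\<^sup>2 = (Re g)\<^sup>2 + (Im g + 1)\<^sup>2"
    using assms(4) unfolding dist_norm circ_pt_0 cmod_def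
    by (simp add: power2_eq_square algebra_simps)
  moreover have "(Re a)\<^sup>2 + (Im a)\<^sup>2 = 1" "(Re g)\<^sup>2 + (Im g)\<^sup>2 = 1"
    using assms(1,2) unfolding cmod_def by simp_all
  ultimately have im: "Im a = Im g" by (simp add: power2_eq_square algebra_simps)
  then have "(Re a - Re g) * (Re a + Re g) = 0"
    using \<open>(Re a)\<^sup>2 + (Im a)\<^sup>2 = 1\<close> \<open>(Re g)\<^sup>2 + (Im g)\<^sup>2 = 1\<close>
    by (simp add: power2_eq_square algebra_simps)
  moreover have "Re a \<noteq> Re g" using im assms(3) by (auto simp: complex_eq_iff)
  ultimately show ?thesis using im by (simp add: complex_eq_iff)
qed

text \<open>First normalisation: \<open>B'\<close> goes to the lowest point of the unit circle, which makes \<open>A\<close> and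
  \<open>C\<close> mirror images in the imaginary axis; a reflection puts \<open>C\<close> in the right half-plane.\<close>
lemma isosceles_normal_form:
  assumes R: "R > 0" and distinct: "A \<noteq> C"
    and on_circle: "dist Oc A = R" "dist Oc B = R" "dist Oc C = R" "dist Oc B' = R"
    and isosceles: "dist B' C = dist B' A"
  shows "\<exists>s w b g. cmod w = 1 \<and> norm b = 1 \<and> norm g = 1 \<and> Re g > 0
     \<and> A = simil s w R Oc (- cnj g) \<and> B = simil s w R Oc b \<and> C = simil s w R Oc g
     \<and> B' = simil s w R Oc (circ_pt 0)"
proof -
  define w where "w = \<i> * (B' - Oc) / of_real R"
  have w: "cmod w = 1"
    unfolding w_def using on_circle(4) R
    by (simp add: norm_mult norm_divide dist_norm norm_minus_commute)
  interpret similarity True w R Oc using w R by unfold_locales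
  obtain a b g where abg: "A = T a" "B = T b" "C = T g" using simil_surj by metis
  have B': "B' = T (circ_pt 0)"
    unfolding circ_pt_0 simil_def w_def using R by (simp add: complex_eq_iff)
  have unit: "norm a = 1" "norm b = 1" "norm g = 1"
    using on_circle(1-3) unfolding abg dist_centre_simil_iff by simp_all
  have "dist (circ_pt 0) a = dist (circ_pt 0) g"
    using isosceles R unfolding B' abg dist_simil by simp
  then have a: "a = - cnj g"
    using unit distinct R abg by (intro unit_equidistant_from_bottom) auto
  moreover have "a \<noteq> g" using distinct abg by auto
  ultimately have "Re g \<noteq> 0" by (auto simp: complex_eq_iff)
  then consider "Re g > 0" | "Re (- cnj g) > 0" by fastforce
  then show ?thesis
  proof cases
    case 1
    then show ?thesis using w unit a abg B' by blast
  next
    case 2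
    have "A = simil False (- w) R Oc (- cnj (- cnj g))" "B = simil False (- w) R Oc (- cnj b)"
      "C = simil False (- w) R Oc (- cnj g)" "B' = simil False (- w) R Oc (circ_pt 0)"
      using abg B' a unfolding simil_True_eq_simil_False by (simp_all add: circ_pt_0)
    moreover have "norm (- cnj b) = 1" "norm (- cnj g) = 1" using unit by simp_all
    ultimately show ?thesis using w 2
      by (intro exI[of _ False] exI[of _ "- w"] exI[of _ "- cnj b"] exI[of _ "- cnj g"]) auto
  qed
qed

locale circle_frame = similarity +
  fixes u v :: real
  assumes arc_bounds: "0 < u" "u < v" "v < pi / 2"

lemma triangle_normal_form:
  assumes distinct: "A \<noteq> B" "B \<noteq> C" "C \<noteq> A"
    and on_circle: "dist Oc A = R" "dist Oc B = R" "dist Oc C = R"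
    and longer: "dist A B > dist B C"
    and B'_def: "dist Oc B' = R" "dist B' C = dist B' A" "opp_sides C A B' B"
  shows "R > 0 \<and> (\<exists>s w u v. cmod w = 1 \<and> 0 < u \<and> u < v \<and> v < pi / 2
     \<and> A = simil s w R Oc (circ_pt (-u)) \<and> B = simil s w R Oc (circ_pt v)
     \<and> C = simil s w R Oc (circ_pt u) \<and> B' = simil s w R Oc (circ_pt 0))"
proof -
  have "0 < dist A B" using distinct(1) by simp
  then have R: "R > 0" using dist_triangle3[of A B Oc] on_circle(1,2) by linarith
  obtain s w b g where w: "cmod w = 1" and unit: "norm b = 1" "norm g = 1" "Re g > 0"
    and pts: "A = simil s w R Oc (- cnj g)" "B = simil s w R Oc b" "C = simil s w R Oc g"
      "B' = simil s w R Oc (circ_pt 0)"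
    using isosceles_normal_form[OF R distinct(3)[symmetric] on_circle B'_def(1,2)] by blast
  interpret similarity s w R Oc using w R by unfold_locales
  obtain u where u: "0 < u" "u < pi / 2" "g = circ_pt u" "- cnj g = circ_pt (-u)"
    using right_half_circle_eq_circ_pt[OF unit(2,3)] by blast
  have "opp_sides (circ_pt u) (circ_pt (-u)) (circ_pt 0) b"
    using B'_def(3) unfolding pts u(4) unfolding u(3) opp_sides_simil .
  moreover have "dist (circ_pt (-u)) b > dist b (circ_pt u)"
    using longer R unfolding pts u(4) unfolding u(3) dist_simil by simp
  ultimately obtain v where "u < v" "v < pi / 2" "b = circ_pt v"
    using circ_pt_major_arc[OF u(1,2) unit(1)] by blast
  then have "cmod w = 1 \<and> 0 < u \<and> u < v \<and> v < pi / 2 \<and> A = T (circ_pt (-u))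
    \<and> B = T (circ_pt v) \<and> C = T (circ_pt u) \<and> B' = T (circ_pt 0)"
    using w pts u by simp
  with R show ?thesis by blast
qed

context circle_frame
begin

lemma claimed_length_eq:
  "2 * R * sin ((angle_at (T (circ_pt v)) (T (circ_pt u)) (T (circ_pt (-u)))
      - angle_at (T (circ_pt v)) (T (circ_pt (-u))) (T (circ_pt u))) / 2)
    * tan (angle_at (T (circ_pt (-u))) (T (circ_pt v)) (T (circ_pt u)) / 2)
   = 2 * R * cos v * tan u"
  unfolding angle_at_simil angles_circ_pt_triangle[OF arc_bounds]
  by (simp add: cos_sin_eq[of v] diff_divide_distrib)

lemma dist_F_A:
  assumes E: "dist Oc E = R" "E \<noteq> T (circ_pt 0)" "(E - T (circ_pt 0)) \<bullet> (T (circ_pt v) - T (circ_pt (-u))) = 0"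
    and F: "(F - T (circ_pt (-u))) \<bullet> (E - T (circ_pt (-u))) = 0" "F = E + t *\<^sub>R (T (circ_pt 0) - E)"
  shows "dist F (T (circ_pt (-u))) = 2 * R * cos v * tan u"
proof -
  obtain e f where ef: "E = T e" "F = T f" using simil_surj by metis
  have "(e - circ_pt 0) \<bullet> (circ_pt v - circ_pt (-u)) = 0"
    using E(3) ratio_pos unfolding ef inner_simil by simp
  then have e: "e = circ_pt (v - u - pi / 2)"
    using E(1,2) unfolding ef dist_centre_simil_iff by (intro perpendicular_chord_circ_pt arc_bounds) auto
  have "T f = T (e + t *\<^sub>R (circ_pt 0 - e))" using F(2) unfolding ef simil_affine .
  then have "f = circ_pt (v - u - pi / 2) + t *\<^sub>R (circ_pt 0 - circ_pt (v - u - pi / 2))"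
    using e simil_inj by blast
  moreover have "(f - circ_pt (-u)) \<bullet> (circ_pt (v - u - pi / 2) - circ_pt (-u)) = 0"
    using F(1) ratio_pos e unfolding ef inner_simil by simp
  ultimately have "norm (f - circ_pt (-u)) = 2 * cos v * tan u"
    by (rule norm_FA_circ_pt[OF arc_bounds])
  then show ?thesis unfolding ef dist_simil by (simp add: dist_norm)
qed

lemma minor_arc_eq_circ_pt:
  assumes "dist Oc D = R" "opp_sides (T (circ_pt u)) (T (circ_pt 0)) D (T (circ_pt (-u)))"
  obtains d where "0 < d" "d < u" "D = T (circ_pt d)"
proof -
  obtain z where z: "D = T z" using simil_surj by metis
  have "norm z = 1" "opp_sides (circ_pt u) (circ_pt 0) z (circ_pt (-u))"
    using assms unfolding z dist_centre_simil_iff opp_sides_simil by simp_all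
  then show ?thesis using opp_sides_minor_arc[of u z] arc_bounds z that by auto
qed

lemma pitot_iff_dist_D_B':
  assumes "dist Oc D = R" "opp_sides (T (circ_pt u)) (T (circ_pt 0)) D (T (circ_pt (-u)))"
  shows "dist (T (circ_pt (-u))) (T (circ_pt v)) + dist (T (circ_pt u)) D
      = dist (T (circ_pt v)) (T (circ_pt u)) + dist D (T (circ_pt (-u)))
    \<longleftrightarrow> dist D (T (circ_pt 0)) = 2 * R * cos v * tan u"
proof -
  obtain d where d: "0 < d" "d < u" "D = T (circ_pt d)" using minor_arc_eq_circ_pt[OF assms] .
  show ?thesis
    using pitot_circ_pt_iff[OF arc_bounds d(1,2)] ratio_pos
    unfolding d(3) dist_simil distrib_left[symmetric] by (simp add: mult.assoc)
qed

lemma exists_pitot_point: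
  "\<exists>D. dist Oc D = R \<and> opp_sides (T (circ_pt u)) (T (circ_pt 0)) D (T (circ_pt (-u)))
     \<and> dist D (T (circ_pt 0)) = 2 * R * cos v * tan u"
proof -
  obtain d where d: "0 < d" "d < u" "sin d = cos v * tan u"
    using exists_pitot_angle[OF arc_bounds] by blast
  have "sin d > 0" using d arc_bounds by (intro sin_gt_zero) auto
  then show ?thesis
    using d arc_bounds opp_sides_minor_arcI[of d u] norm_circ_pt[of d]
    by (intro exI[of _ "T (circ_pt d)"])
      (simp add: dist_simil dist_circ_pt dist_centre_simil_iff opp_sides_simil)
qed

lemma convex_tangential_pitot_point:
  assumes "dist Oc D = R" "opp_sides (T (circ_pt u)) (T (circ_pt 0)) D (T (circ_pt (-u)))"
    and DB': "dist D (T (circ_pt 0)) = 2 * R * cos v * tan u"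
  shows "convex_quad (T (circ_pt (-u))) (T (circ_pt v)) (T (circ_pt u)) D
    \<and> tangential_quad (T (circ_pt (-u))) (T (circ_pt v)) (T (circ_pt u)) D"
proof -
  obtain d where d: "0 < d" "d < u" "D = T (circ_pt d)" using minor_arc_eq_circ_pt[OF assms(1,2)] .
  have "sin d > 0" using d arc_bounds by (intro sin_gt_zero) auto
  then have "sin d = cos v * tan u" using DB' ratio_pos unfolding d(3) by (simp add: dist_simil dist_circ_pt)
  then have "pitot_config u v d"
    using d arc_bounds cos_gt_zero_pi[of u] by unfold_locales (auto simp: tan_def field_simps)
  then have "incircle_data (orient s * -1) (T (circ_pt (-u))) (T (circ_pt v)) (T (circ_pt u))
      D (T (pitot_config.incentre v d)) (R * pitot_config.inradius u v d)"
    unfolding d(3) by (intro incircle_data_simil pitot_config.incircle_data_circ_pt)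
  moreover have "orient s * -1 = 1 \<or> orient s * -1 = -1" by (simp add: orient_def)
  ultimately show ?thesis using convex_tangential_quad_if_incircle_data by blast
qed

end

theorem mainTheorem8:
  fixes A B C Oc B' E F :: complex and R :: real
  assumes distinct: "A \<noteq> B" "B \<noteq> C" "C \<noteq> A"
    and onGamma: "dist Oc A = R" "dist Oc B = R" "dist Oc C = R"
    and AB_gt_BC: "dist A B > dist B C"
    and B'_def: "dist Oc B' = R" "dist B' C = dist B' A" "opp_sides C A B' B"
    and E_def: "dist Oc E = R" "E \<noteq> B'" "(E - B') \<bullet> (B - A) = 0"
    and F_def: "(F - A) \<bullet> (E - A) = 0" "\<exists>t::real. F = E + t *\<^sub>R (B' - E)"
  shows "dist F A = 2 * R * sin ((angle_at B C A - angle_at B A C) / 2) * tan (angle_at A B C / 2)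
     \<and> (\<forall>D. dist Oc D = R \<and> opp_sides C B' D A \<longrightarrow>
          (dist A B + dist C D = dist B C + dist D A \<longleftrightarrow>
           dist D B' = 2 * R * sin ((angle_at B C A - angle_at B A C) / 2) * tan (angle_at A B C / 2)))
     \<and> (\<exists>D. dist Oc D = R \<and> opp_sides C B' D A \<and> dist D B' = dist F A)
     \<and> (\<forall>D. dist Oc D = R \<and> opp_sides C B' D A \<and> dist D B' = dist F A \<longrightarrow>
          convex_quad A B C D \<and> tangential_quad A B C D)"
proof -
  obtain s w u v where R: "R > 0" and frame: "cmod w = 1" "0 < u" "u < v" "v < pi / 2"
    and pts: "A = simil s w R Oc (circ_pt (-u))" "B = simil s w R Oc (circ_pt v)"
      "C = simil s w R Oc (circ_pt u)" "B' = simil s w R Oc (circ_pt 0)"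
    using triangle_normal_form[OF distinct onGamma AB_gt_BC B'_def] by blast
  interpret circle_frame s w R Oc u v using R frame by unfold_locales
  have len: "2 * R * sin ((angle_at B C A - angle_at B A C) / 2) * tan (angle_at A B C / 2)
      = 2 * R * cos v * tan u"
    unfolding pts by (rule claimed_length_eq)
  obtain t where "F = E + t *\<^sub>R (B' - E)" using F_def(2) by blast
  then have FA: "dist F A = 2 * R * cos v * tan u"
    using E_def F_def(1) unfolding pts by (intro dist_F_A) auto
  show ?thesis
    unfolding len FA unfolding pts
    using pitot_iff_dist_D_B' exists_pitot_point convex_tangential_pitot_point by blast
qed

end
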